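(* Let $\mathcal F$ be a family of finite ordered graphs and let $\mathrm{Forb}^+_{T_{\mathrm{Graph}}\cup T_{\mathrm{LinOrder}}}(\mathcal F)$ be the theory of all ordered graphs that contain no non-induced copy of any member of $\mathcal F$. For the axiom-adding interpretation $I^<_{\mathcal F}\colon T_{\mathrm{Graph}}\leadsto\mathrm{Forb}^+_{T_{\mathrm{Graph}}\cup T_{\mathrm{LinOrder}}}(\mathcal F)$ (acting identically on $E$, so $I^<_{\mathcal F}(N)$ is the graph part of $N$), we have $$\chi(I^<_{\mathcal F})=\max\{\chi_<(\mathcal F),1\},$$ where $\chi_<(\mathcal F)=\inf\{\chi_<(F):F\in\mathcal F\}$ (with $\inf\varnothing=\infty$).
   Context: An ordered graph is a finite simple graph together with a strict linear order $<$ on its vertex set. An ordered graph $G$ contains a non-induced copy of an ordered graph $F$ if there is an injection $V(F)\to V(G)$ that preserves the order and maps edges to edges. A proper interval coloring of an ordered graph $G$ is a map $f\colon V(G)\to[\ell]$ that is a proper coloring of the graph (adjacent vertices get distinct colors) and whose color classes are intervals of the order (if $u<v<w$ and $f(u)=f(w)$ then $f(v)=f(u)$). The interval chromatic number $\chi_<(G)$ is the least $\ell$ admitting a proper interval coloring $f\colon V(G)\to[\ell]$. For an open interpretation $I\colon T_{\mathrm{Graph}}\leadsto T$, $\chi(I)=\sup(\{\ell\in\mathbb{N}_+:\forall n\in\mathbb{N}\ \exists N\in\mathcal M_n[T],\ T_{n,\ell}\subseteq I(N)\}\cup\{0\})+1$, where $\mathcal M_n[T]$ is the set of $n$-vertex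 models of $T$ up to isomorphism, $T_{n,\ell}$ the complete $\ell$-partite graph on $n$ vertices with parts of sizes $\lfloor n/\ell\rfloor$ or $\lceil n/\ell\rceil$, and $G\subseteq H$ means an injection mapping edges to edges. *)

theory Defs
  imports Main "HOL-Library.Extended_Nat"
begin

text \<open>A finite ordered graph with k vertices is represented (up to isomorphism)
  on the vertex set {0..<k} with the natural order of nat; the edge relation
  is symmetric, irreflexive and lives on {0..<k}.\<close>

definition ordered_graph :: "nat \<Rightarrow> (nat \<Rightarrow> nat \<Rightarrow> bool) \<Rightarrow> bool" where
  "ordered_graph k E \<longleftrightarrow> (\<forall>u v. E u v \<longrightarrow> u < k \<and> v < k \<and> u \<noteq> v \<and> E v u)"

definition contains_ordered :: "nat \<Rightarrow> (nat \<Rightarrow> nat \<Rightarrow> bool) \<Rightarrow> nat \<Rightarrow> (nat \<Rightarrow> nat \<Rightarrow> bool) \<Rightarrow> bool" where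
  "contains_ordered n E k EF \<longleftrightarrow>
     (\<exists>g. strict_mono_on {0..<k} g \<and> g ` {0..<k} \<subseteq> {0..<n} \<and>
          (\<forall>u<k. \<forall>v<k. EF u v \<longrightarrow> E (g u) (g v)))"

definition forb_model :: "(nat \<times> (nat \<Rightarrow> nat \<Rightarrow> bool)) set \<Rightarrow> nat \<Rightarrow> (nat \<Rightarrow> nat \<Rightarrow> bool) \<Rightarrow> bool" where
  "forb_model \<F> n E \<longleftrightarrow> ordered_graph n E \<and> (\<forall>(k, EF) \<in> \<F>. \<not> contains_ordered n E k EF)"

text \<open>Graph G=(n,E) contains (as a not necessarily induced subgraph) the balanced complete
  l-partite graph T_{n,l}: there is a partition p of {0..<n} into l parts of sizes
  floor(n/l) or ceil(n/l), and an injection f into the vertices of G mapping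
  every pair of vertices in different parts to an edge.\<close>
definition contains_turan :: "nat \<Rightarrow> nat \<Rightarrow> (nat \<Rightarrow> nat \<Rightarrow> bool) \<Rightarrow> bool" where
  "contains_turan n l E \<longleftrightarrow>
     (\<exists>p f. (\<forall>i<n. p i < l) \<and>
            (\<forall>j<l. card {i. i < n \<and> p i = j} \<in> {n div l, (n + l - 1) div l}) \<and>
            inj_on f {0..<n} \<and> f ` {0..<n} \<subseteq> {0..<n} \<and>
            (\<forall>u<n. \<forall>v<n. p u \<noteq> p v \<longrightarrow> E (f u) (f v)))"

definition chi_interp :: "(nat \<times> (nat \<Rightarrow> nat \<Rightarrow> bool)) set \<Rightarrow> enat" where
  "chi_interp \<F> =
     Sup ({enat l | l. l \<ge> 1 \<and> (\<forall>n. \<exists>E. forb_model \<F> n E \<and> contains_turan n l E)} \<union> {0}) + 1"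

definition proper_interval_coloring :: "nat \<Rightarrow> (nat \<Rightarrow> nat \<Rightarrow> bool) \<Rightarrow> nat \<Rightarrow> (nat \<Rightarrow> nat) \<Rightarrow> bool" where
  "proper_interval_coloring k E l f \<longleftrightarrow>
     (\<forall>i<k. f i \<in> {1..l}) \<and>
     (\<forall>u<k. \<forall>v<k. E u v \<longrightarrow> f u \<noteq> f v) \<and>
     (\<forall>u v w. u < v \<and> v < w \<and> w < k \<and> f u = f w \<longrightarrow> f v = f u)"

definition interval_chromatic_number :: "nat \<Rightarrow> (nat \<Rightarrow> nat \<Rightarrow> bool) \<Rightarrow> nat" where
  "interval_chromatic_number k E = (LEAST l. \<exists>f. proper_interval_coloring k E l f)"

definition interval_chromatic_family :: "(nat \<times> (nat \<Rightarrow> nat \<Rightarrow> bool)) set \<Rightarrow> enat" where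
  "interval_chromatic_family \<F> = (INF F\<in>\<F>. enat (interval_chromatic_number (fst F) (snd F)))"

end

theory Submission
  imports Defs "HOL-Library.Infinite_Set" "HOL-Library.Product_Lexorder"
begin

text \<open>
  Call a proper colouring by \<open>0, \<dots>, l - 1\<close> that is non-decreasing along the vertex order
  monotone. Up to renaming colours these are exactly the proper interval colourings, so
  \<open>\<chi>\<^sub><(F) \<le> l\<close> iff \<open>F\<close> has a monotone \<open>l\<close>-colouring.

  If every member of \<open>\<F>\<close> has interval chromatic number greater than \<open>l\<close>, sort the
  vertices of \<open>T\<^sub>n\<^sub>,\<^sub>l\<close> by part: the resulting ordered graph has a monotone
  \<open>l\<close>-colouring, hence so does every ordered graph it contains, so it is a model of
  \<open>Forb\<^sup>+(\<F>)\<close> containing \<open>T\<^sub>n\<^sub>,\<^sub>l\<close>.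

  Conversely, let \<open>F \<in> \<F>\<close> on \<open>k\<close> vertices have a monotone \<open>l\<close>-colouring \<open>b\<close> and let
  \<open>G\<close> contain \<open>T\<^sub>n\<^sub>,\<^sub>l\<close> with \<open>n = l\<^sup>2 k\<close>. Each part then has at least \<open>l k\<close>
  vertices in \<open>G\<close>, and a greedy left-to-right scan finds \<open>l\<close> distinct parts with \<open>k\<close>
  vertices each, every block lying after the previous one. Sending vertex \<open>u\<close> of \<open>F\<close> to
  the \<open>u\<close>-th vertex of block \<open>b u\<close> embeds \<open>F\<close> into \<open>G\<close>.

  Hence the \<open>l\<close> admitted in the supremum defining \<open>\<chi>(I)\<close> are exactly
  \<open>1 \<le> l < \<chi>\<^sub><(\<F>)\<close>.
\<close>

definition monotone_coloring ::
    "nat \<Rightarrow> (nat \<Rightarrow> nat \<Rightarrow> bool) \<Rightarrow> nat \<Rightarrow> (nat \<Rightarrow> nat) \<Rightarrow> bool" where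
  "monotone_coloring n E l q \<longleftrightarrow>
     (\<forall>x<n. q x < l) \<and> (\<forall>x y. x \<le> y \<longrightarrow> y < n \<longrightarrow> q x \<le> q y) \<and>
     (\<forall>x<n. \<forall>y<n. E x y \<longrightarrow> q x \<noteq> q y)"

lemma monotone_coloring_imp_proper_interval_coloring:
  assumes "monotone_coloring n E l q"
  shows "proper_interval_coloring n E l (\<lambda>x. Suc (q x))"
proof -
  have q_range: "\<forall>x<n. q x < l"
    and q_mono: "\<forall>x y. x \<le> y \<longrightarrow> y < n \<longrightarrow> q x \<le> q y"
    and q_edge: "\<forall>x<n. \<forall>y<n. E x y \<longrightarrow> q x \<noteq> q y"
    using assms unfolding monotone_coloring_def by blast+
  have "q v = q u" if "u < v" "v < w" "w < n" "q u = q w" for u v w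
  proof -
    have "q u \<le> q v" "q v \<le> q w"
      using q_mono \<open>u < v\<close> \<open>v < w\<close> \<open>w < n\<close> by simp_all
    then show ?thesis using \<open>q u = q w\<close> by linarith
  qed
  then show ?thesis
    using q_range q_edge unfolding proper_interval_coloring_def
    by (simp add: Suc_leI) blast
qed

lemma proper_interval_coloring_imp_monotone_coloring:
  assumes "proper_interval_coloring n E l col"
  shows "\<exists>q. monotone_coloring n E l q"
proof -
  have col_range: "\<forall>x<n. col x \<in> {1..l}"
    and col_edge: "\<forall>x<n. \<forall>y<n. E x y \<longrightarrow> col x \<noteq> col y"
    and col_interval: "\<forall>u v w. u < v \<and> v < w \<and> w < n \<and> col u = col w \<longrightarrow> col v = col u"
    using assms unfolding proper_interval_coloring_def by blast+
  define q where "q x = card (col ` {..x}) - 1" for x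
  have card_pos: "0 < card (col ` {..x})" for x
    by (simp add: card_gt_0_iff)
  have "q x < l" if "x < n" for x
  proof -
    have "col ` {..x} \<subseteq> {1..l}" using col_range that by auto
    then have "card (col ` {..x}) \<le> l" using card_mono[of "{1..l}"] by simp
    then show ?thesis using card_pos[of x] unfolding q_def by linarith
  qed
  moreover have "q x \<le> q y" if "x \<le> y" for x y
    unfolding q_def using that by (intro diff_le_mono card_mono) auto
  moreover have same_col: "col x = col y" if "x < y" "y < n" "q x = q y" for x y
  proof -
    have "col ` {..x} = col ` {..y}"
      using \<open>x < y\<close> card_pos[of x] card_pos[of y] \<open>q x = q y\<close> unfolding q_def
      by (intro card_subset_eq) auto
    then have "col y \<in> col ` {..x}" by auto
    then obtain w where "w \<le> x" "col w = col y" by auto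
    then show ?thesis
      using col_interval[rule_format, of w x y] that by (cases "w = x") auto
  qed
  moreover have "q x \<noteq> q y" if "x < n" "y < n" "E x y" for x y
  proof
    assume "q x = q y"
    then have "col x = col y"
      using same_col[of x y] same_col[of y x] \<open>x < n\<close> \<open>y < n\<close> by (metis linorder_neq_iff)
    then show False using col_edge that by blast
  qed
  ultimately have "monotone_coloring n E l q"
    unfolding monotone_coloring_def by blast
  then show ?thesis by blast
qed

lemma interval_chromatic_number_le_iff:
  assumes "ordered_graph k EF"
  shows "interval_chromatic_number k EF \<le> l \<longleftrightarrow> (\<exists>b. monotone_coloring k EF l b)"
proof
  assume le: "interval_chromatic_number k EF \<le> l"
  have "proper_interval_coloring k EF k Suc"
    using assms unfolding proper_interval_coloring_def ordered_graph_def by auto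
  then have "\<exists>m col. proper_interval_coloring k EF m col" by blast
  then have "\<exists>col. proper_interval_coloring k EF (interval_chromatic_number k EF) col"
    unfolding interval_chromatic_number_def by (rule LeastI_ex)
  then obtain col where "proper_interval_coloring k EF (interval_chromatic_number k EF) col" ..
  with le have "proper_interval_coloring k EF l col"
    unfolding proper_interval_coloring_def by (meson atLeastAtMost_iff le_trans)
  then show "\<exists>b. monotone_coloring k EF l b"
    by (rule proper_interval_coloring_imp_monotone_coloring)
next
  assume "\<exists>b. monotone_coloring k EF l b"
  then obtain b where "proper_interval_coloring k EF l (\<lambda>x. Suc (b x))"
    using monotone_coloring_imp_proper_interval_coloring by blast
  then show "interval_chromatic_number k EF \<le> l"
    unfolding interval_chromatic_number_def by (intro Least_le exI)
qed

lemma contains_ordered_monotone_coloring: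
  assumes "contains_ordered n E k EF" and "monotone_coloring n E l q"
  shows "\<exists>b. monotone_coloring k EF l b"
proof -
  obtain g where g_mono: "strict_mono_on {0..<k} g" and g_range: "g ` {0..<k} \<subseteq> {0..<n}"
    and g_edge: "\<forall>u<k. \<forall>v<k. EF u v \<longrightarrow> E (g u) (g v)"
    using assms(1) unfolding contains_ordered_def by blast
  have g_less: "g u < n" if "u < k" for u
    using g_range that by (auto simp: image_subset_iff)
  have "monotone_coloring k EF l (q \<circ> g)"
    unfolding monotone_coloring_def
  proof (intro conjI allI impI)
    show "(q \<circ> g) u < l" if "u < k" for u
      using assms(2) g_less[OF that] unfolding monotone_coloring_def by simp
    show "(q \<circ> g) u \<le> (q \<circ> g) v" if "u \<le> v" "v < k" for u v
      using assms(2) g_less[OF \<open>v < k\<close>] strict_mono_on_leD[OF g_mono, of u v] that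
      unfolding monotone_coloring_def by simp
    show "(q \<circ> g) u \<noteq> (q \<circ> g) v" if "u < k" "v < k" "EF u v" for u v
      using assms(2) g_edge g_less that unfolding monotone_coloring_def by simp
  qed
  then show ?thesis by blast
qed

lemma card_residue_class:
  fixes l n j :: nat
  assumes "0 < l" "j < l"
  shows "card {i. i < n \<and> i mod l = j} \<in> {n div l, (n + l - 1) div l}"
proof -
  have count: "card {i. i < n \<and> i mod l = j} = n div l + (if j < n mod l then 1 else 0)"
  proof (induction n)
    case (Suc n)
    have "{i. i < Suc n \<and> i mod l = j} =
          {i. i < n \<and> i mod l = j} \<union> {i. i = n \<and> n mod l = j}"
      by (auto simp: less_Suc_eq)
    then have "card {i. i < Suc n \<and> i mod l = j} =
               card {i. i < n \<and> i mod l = j} + (if n mod l = j then 1 else 0)"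
      by (auto simp: card_Un_disjoint)
    then show ?case using Suc.IH assms by (auto simp: mod_Suc div_Suc)
  qed simp
  have "n mod l < l" using assms(1) by simp
  have "n + l - 1 = n mod l + l - 1 + n div l * l"
    using div_mult_mod_eq[of n l] assms(1) by linarith
  then have "(n + l - 1) div l = (n mod l + l - 1 + n div l * l) div l"
    by (rule arg_cong)
  also have "\<dots> = n div l + (n mod l + l - 1) div l"
    by (rule div_mult_self1) (use assms(1) in simp)
  also have "\<dots> = n div l + (if n mod l = 0 then 0 else 1)"
    using \<open>n mod l < l\<close> by (auto simp: div_if)
  finally show ?thesis using count assms by auto
qed

lemma exists_monotone_relabelling:
  fixes p :: "nat \<Rightarrow> 'a::wellorder"
  shows "\<exists>f q. bij_betw f {..<n} {..<n} \<and> (\<forall>i<n. q (f i) = p i) \<and>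
           (\<forall>x y. x \<le> y \<longrightarrow> y < n \<longrightarrow> q x \<le> q y)"
proof -
  \<comment> \<open>\<open>h\<close> lists the pairs \<open>(p i, i)\<close> in lexicographic order;
    \<open>f\<close> sends \<open>i\<close> to the position of its pair\<close>
  define key where "key i = (p i, i)" for i
  have "inj_on key {..<n}"
    by (simp add: inj_on_def key_def)
  then have key: "bij_betw key {..<n} (key ` {..<n})" and "card (key ` {..<n}) = n"
    by (simp_all add: inj_on_imp_bij_betw card_image)
  then obtain h where h: "bij_betw h {..<n} (key ` {..<n})" "strict_mono_on {..<n} h"
    using ex_bij_betw_strict_mono_card[of "key ` {..<n}"] by auto
  define f where "f = inv_into {..<n} h \<circ> key"
  have "bij_betw f {..<n} {..<n}"
    unfolding f_def using key bij_betw_inv_into[OF h(1)] by (rule bij_betw_trans)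
  moreover have "fst (h (f i)) = p i" if "i < n" for i
    using that bij_betw_inv_into_right[OF h(1)] by (simp add: f_def key_def)
  moreover have "fst (h x) \<le> fst (h y)" if "x \<le> y" "y < n" for x y
  proof -
    have "h x \<le> h y" using strict_mono_on_leD[OF h(2)] that by simp
    then show ?thesis by (auto simp: less_eq_prod_def)
  qed
  ultimately show ?thesis
    by (intro exI[of _ f] exI[of _ "\<lambda>x. fst (h x)"] conjI allI impI) simp_all
qed

lemma ordered_turan_graph_exists:
  assumes "0 < l"
  shows "\<exists>E q. ordered_graph n E \<and> contains_turan n l E \<and> monotone_coloring n E l q"
proof -
  obtain f q where f: "bij_betw f {..<n} {..<n}" and q_f: "\<forall>i<n. q (f i) = i mod l"
    and q_mono: "\<forall>x y. x \<le> y \<longrightarrow> y < n \<longrightarrow> q x \<le> q y"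
    using exists_monotone_relabelling[of n "\<lambda>i. i mod l"] by blast
  define E where "E x y \<longleftrightarrow> x < n \<and> y < n \<and> q x \<noteq> q y" for x y
  have f_less: "f i < n" if "i < n" for i
    using f that by (auto dest: bij_betw_apply)
  have "ordered_graph n E"
    unfolding ordered_graph_def E_def by auto
  moreover have "contains_turan n l E"
    unfolding contains_turan_def
  proof (intro exI conjI allI impI)
    show "i mod l < l" for i
      using assms by simp
    show "card {i. i < n \<and> i mod l = j} \<in> {n div l, (n + l - 1) div l}" if "j < l" for j
      using card_residue_class assms that by blast
    show "inj_on f {0..<n}"
      using f by (simp add: bij_betw_def lessThan_atLeast0)
    show "f ` {0..<n} \<subseteq> {0..<n}"
      using f_less by auto
    show "E (f u) (f v)" if "u < n" "v < n" "u mod l \<noteq> v mod l" for u v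
      using that q_f f_less unfolding E_def by simp
  qed
  moreover have "monotone_coloring n E l q"
    unfolding monotone_coloring_def
  proof (intro conjI allI impI)
    show "q x < l" if "x < n" for x
    proof -
      obtain i where "i < n" "x = f i"
        using f \<open>x < n\<close> by (metis bij_betw_iff_bijections lessThan_iff)
      then show ?thesis using q_f assms by simp
    qed
    show "q x \<le> q y" if "x \<le> y" "y < n" for x y
      using q_mono that by blast
    show "q x \<noteq> q y" if "x < n" "y < n" "E x y" for x y
      using that unfolding E_def by blast
  qed
  ultimately show ?thesis by blast
qed

lemma exists_first_full_class:
  fixes q :: "nat \<Rightarrow> 'c"
  assumes "finite V" and "0 < k" and "c1 \<in> L" and "k \<le> card {x\<in>V. q x = c1}"
  shows "\<exists>t c0. c0 \<in> L \<and> card {x\<in>V. x \<le> t \<and> q x = c0} = k \<and>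
           (\<forall>c\<in>L. card {x\<in>V. x \<le> t \<and> q x = c} \<le> k)"
proof -
  define full where "full t \<longleftrightarrow> (\<exists>c\<in>L. k \<le> card {x\<in>V. x \<le> t \<and> q x = c})" for t
  obtain B where "\<forall>x\<in>V. x \<le> B"
    using assms(1) finite_nat_set_iff_bounded_le by blast
  then have "{x\<in>V. x \<le> B \<and> q x = c1} = {x\<in>V. q x = c1}"
    by auto
  then have "full B"
    unfolding full_def using assms(3,4) by (intro bexI[of _ c1]) simp_all
  define t where "t = (LEAST t. full t)"
  obtain c0 where c0: "c0 \<in> L" "k \<le> card {x\<in>V. x \<le> t \<and> q x = c0}"
    using LeastI[of full B, OF \<open>full B\<close>] unfolding full_def t_def by blast
  have at_most_k: "card {x\<in>V. x \<le> t \<and> q x = c} \<le> k" if "c \<in> L" for c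
  proof -
    have before: "card {x\<in>V. x < t \<and> q x = c} < k"
    proof (cases t)
      case 0
      then show ?thesis using assms(2) by simp
    next
      case (Suc t')
      then have "\<not> full t'"
        using not_less_Least[of t' full] unfolding t_def by simp
      moreover have "{x\<in>V. x < t \<and> q x = c} = {x\<in>V. x \<le> t' \<and> q x = c}"
        using Suc by auto
      ultimately show ?thesis
        using that unfolding full_def by (simp add: not_le)
    qed
    have "{x\<in>V. x \<le> t \<and> q x = c} \<subseteq> insert t {x\<in>V. x < t \<and> q x = c}"
      by auto
    then have "card {x\<in>V. x \<le> t \<and> q x = c} \<le> card (insert t {x\<in>V. x < t \<and> q x = c})"
      using assms(1) by (intro card_mono) auto
    also have "\<dots> \<le> Suc (card {x\<in>V. x < t \<and> q x = c})"
      by (simp add: card_insert_if)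
    finally show ?thesis
      using before by simp
  qed
  then have "card {x\<in>V. x \<le> t \<and> q x = c0} = k"
    using c0 by (simp add: le_antisym)
  then show ?thesis
    using c0(1) at_most_k by blast
qed

lemma strict_mono_on_concat:
  fixes e s :: "nat \<Rightarrow> 'a::linorder"
  assumes "strict_mono_on {..<k} e" and "strict_mono_on {..<n} s"
    and "\<forall>x<k. e x \<le> t" and "\<forall>x<n. t < s x"
  shows "strict_mono_on {..<k + n} (\<lambda>x. if x < k then e x else s (x - k))"
proof (rule strict_mono_onI)
  fix x y assume "x \<in> {..<k + n}" "y \<in> {..<k + n}" "x < y"
  then consider "y < k" | "x < k" "k \<le> y" | "k \<le> x"
    by linarith
  then show "(if x < k then e x else s (x - k)) < (if y < k then e y else s (y - k))"
  proof cases
    case 1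
    then show ?thesis using \<open>x < y\<close> strict_mono_onD[OF assms(1)] by simp
  next
    case 2
    then have "e x \<le> t" "t < s (y - k)"
      using assms(3,4) \<open>y \<in> {..<k + n}\<close> by auto
    then show ?thesis using 2 by simp
  next
    case 3
    then show ?thesis
      using \<open>x < y\<close> \<open>y \<in> {..<k + n}\<close> strict_mono_onD[OF assms(2), of "x - k" "y - k"] by auto
  qed
qed

lemma increasing_blocks_in_distinct_classes:
  fixes q :: "nat \<Rightarrow> 'c" and V :: "nat set"
  assumes "finite V" and "finite L" and "m \<le> card L" and "0 < k"
    and "\<forall>c\<in>L. m * k \<le> card {x\<in>V. q x = c}"
  shows "\<exists>s h. strict_mono_on {..<m * k} s \<and> s ` {..<m * k} \<subseteq> V \<and>
           inj_on h {..<m} \<and> h ` {..<m} \<subseteq> L \<and> (\<forall>x<m * k. q (s x) = h (x div k))"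
  using assms
proof (induction m arbitrary: V L)
  case 0
  show ?case by (intro exI[of _ id]) auto
next
  case (Suc m V L)
  \<comment> \<open>the first block consists of the \<open>k\<close> vertices of the class \<open>c0\<close> that fills up first;
    every other class still has \<open>m * k\<close> vertices after them\<close>
  obtain c1 where "c1 \<in> L"
    using Suc.prems(3) by fastforce
  then have "k \<le> card {x\<in>V. q x = c1}"
    using Suc.prems(5) by (metis le_add1 mult_Suc order_trans)
  then obtain t c0 where c0: "c0 \<in> L" and card_c0: "card {x\<in>V. x \<le> t \<and> q x = c0} = k"
    and at_most_k: "\<forall>c\<in>L. card {x\<in>V. x \<le> t \<and> q x = c} \<le> k"
    using exists_first_full_class[OF Suc.prems(1,4) \<open>c1 \<in> L\<close>] by blast
  define V' where "V' = {x\<in>V. t < x}"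
  have "\<forall>c\<in>L - {c0}. m * k \<le> card {x\<in>V'. q x = c}"
  proof
    fix c assume "c \<in> L - {c0}"
    have split: "{x\<in>V. q x = c} = {x\<in>V. x \<le> t \<and> q x = c} \<union> {x\<in>V'. q x = c}"
      unfolding V'_def by auto
    have "card {x\<in>V. q x = c} \<le> card {x\<in>V. x \<le> t \<and> q x = c} + card {x\<in>V'. q x = c}"
      unfolding split by (rule card_Un_le)
    then show "m * k \<le> card {x\<in>V'. q x = c}"
      using Suc.prems(5) at_most_k \<open>c \<in> L - {c0}\<close> by fastforce
  qed
  then have "\<exists>s h. strict_mono_on {..<m * k} s \<and> s ` {..<m * k} \<subseteq> V' \<and>
      inj_on h {..<m} \<and> h ` {..<m} \<subseteq> L - {c0} \<and> (\<forall>x<m * k. q (s x) = h (x div k))"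
    using Suc.prems(1-4) c0 unfolding V'_def by (intro Suc.IH) auto
  then obtain s' h' where s': "strict_mono_on {..<m * k} s'" "s' ` {..<m * k} \<subseteq> V'"
    and h': "inj_on h' {..<m}" "h' ` {..<m} \<subseteq> L - {c0}"
    and q_s': "\<forall>x<m * k. q (s' x) = h' (x div k)"
    by blast
  obtain e where e: "bij_betw e {..<k} {x\<in>V. x \<le> t \<and> q x = c0}" "strict_mono_on {..<k} e"
    using ex_bij_betw_strict_mono_card[of "{x\<in>V. x \<le> t \<and> q x = c0}"] Suc.prems(1) card_c0
    by auto
  have e_first: "e x \<in> V \<and> e x \<le> t \<and> q (e x) = c0" if "x < k" for x
    using bij_betw_apply[OF e(1)] that by simp
  have s'_after: "s' x \<in> V \<and> t < s' x" if "x < m * k" for x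
    using s'(2) that unfolding V'_def by auto
  define s where "s x = (if x < k then e x else s' (x - k))" for x
  define h where "h = case_nat c0 h'"
  show ?case
  proof (intro exI[of _ s] exI[of _ h] conjI)
    show "strict_mono_on {..<Suc m * k} s"
      using strict_mono_on_concat[OF e(2) s'(1), of t] e_first s'_after unfolding s_def by simp
    show "s ` {..<Suc m * k} \<subseteq> V"
      using e_first s'_after unfolding s_def by auto
    show "inj_on h {..<Suc m}"
    proof (rule inj_onI)
      fix i j assume "i \<in> {..<Suc m}" "j \<in> {..<Suc m}" "h i = h j"
      then show "i = j"
        using inj_onD[OF h'(1)] h'(2) unfolding h_def
        by (cases i; cases j) (auto simp: image_subset_iff)
    qed
    show "h ` {..<Suc m} \<subseteq> L"
      using h'(2) c0 unfolding h_def by (auto simp: image_subset_iff split: nat.split)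
    show "\<forall>x<Suc m * k. q (s x) = h (x div k)"
    proof (intro allI impI)
      fix x assume "x < Suc m * k"
      show "q (s x) = h (x div k)"
      proof (cases "x < k")
        case True
        then show ?thesis using e_first unfolding s_def h_def by simp
      next
        case False
        then have "x - k < m * k" "x div k = Suc ((x - k) div k)"
          using \<open>x < Suc m * k\<close> le_div_geq[OF \<open>0 < k\<close>] by auto
        then show ?thesis using q_s' False unfolding s_def h_def by simp
      qed
    qed
  qed
qed

lemma contains_turan_imp_large_classes:
  assumes "contains_turan n l E"
  shows "\<exists>q. (\<forall>c<l. n div l \<le> card {x\<in>{..<n}. q x = c}) \<and>
             (\<forall>x<n. \<forall>y<n. q x \<noteq> q y \<longrightarrow> E x y)"
proof -
  obtain p f where p_classes: "\<forall>j<l. card {i. i < n \<and> p i = j} \<in> {n div l, (n + l - 1) div l}"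
    and f_inj: "inj_on f {0..<n}" and f_range: "f ` {0..<n} \<subseteq> {0..<n}"
    and f_edge: "\<forall>u<n. \<forall>v<n. p u \<noteq> p v \<longrightarrow> E (f u) (f v)"
    using assms unfolding contains_turan_def by (elim exE conjE) blast
  have f_bij: "bij_betw f {..<n} {..<n}"
    using f_inj f_range endo_inj_surj[of "{..<n}" f]
    by (simp add: bij_betw_def lessThan_atLeast0)
  define q where "q x = p (inv_into {..<n} f x)" for x
  have q_f: "q (f i) = p i" if "i < n" for i
    using f_bij that unfolding q_def by (simp add: bij_betw_def inv_into_f_f)
  have f_inv: "inv_into {..<n} f x < n \<and> f (inv_into {..<n} f x) = x" if "x < n" for x
    using bij_betw_apply[OF bij_betw_inv_into[OF f_bij]] bij_betw_inv_into_right[OF f_bij] that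
    by simp
  have "n div l \<le> card {x\<in>{..<n}. q x = c}" if "c < l" for c
  proof -
    have "{x\<in>{..<n}. q x = c} = f ` {i. i < n \<and> p i = c}"
    proof (intro equalityI subsetI)
      fix x assume "x \<in> {x\<in>{..<n}. q x = c}"
      then show "x \<in> f ` {i. i < n \<and> p i = c}"
        using f_inv[of x] unfolding q_def by (intro image_eqI[of x f "inv_into {..<n} f x"]) auto
    next
      fix x assume "x \<in> f ` {i. i < n \<and> p i = c}"
      then show "x \<in> {x\<in>{..<n}. q x = c}"
        using q_f bij_betw_apply[OF f_bij] by auto
    qed
    moreover have "inj_on f {i. i < n \<and> p i = c}"
      using f_inj by (rule inj_on_subset) auto
    moreover have "n div l \<le> card {i. i < n \<and> p i = c}"
      using p_classes that div_le_mono[of n "n + l - 1" l] by auto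
    ultimately show ?thesis by (simp add: card_image)
  qed
  moreover have "E x y" if "x < n" "y < n" "q x \<noteq> q y" for x y
    using f_edge f_inv[OF that(1)] f_inv[OF that(2)] that(3) unfolding q_def by metis
  ultimately show ?thesis by blast
qed

lemma contains_turan_imp_contains_ordered:
  assumes turan: "contains_turan n l E" and b: "monotone_coloring k EF l b"
    and large: "l * k \<le> n div l"
  shows "contains_ordered n E k EF"
proof (cases "k = 0")
  case True
  then show ?thesis unfolding contains_ordered_def by (auto simp: strict_mono_on_def)
next
  case False
  obtain q where class_size: "\<forall>c<l. n div l \<le> card {x\<in>{..<n}. q x = c}"
    and E_q: "\<forall>x<n. \<forall>y<n. q x \<noteq> q y \<longrightarrow> E x y"
    using contains_turan_imp_large_classes[OF turan] by blast
  have "\<forall>c\<in>{..<l}. l * k \<le> card {x\<in>{..<n}. q x = c}"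
    using class_size large by (auto intro: le_trans)
  then obtain s h where s_mono: "strict_mono_on {..<l * k} s"
    and s_range: "s ` {..<l * k} \<subseteq> {..<n}" and h_inj: "inj_on h {..<l}" and q_s: "\<forall>x<l * k. q (s x) = h (x div k)"
    using increasing_blocks_in_distinct_classes[of "{..<n}" "{..<l}" l k q] False by auto
  have b_range: "\<forall>u<k. b u < l"
    and b_mono: "\<forall>u v. u \<le> v \<longrightarrow> v < k \<longrightarrow> b u \<le> b v"
    and b_edge: "\<forall>u<k. \<forall>v<k. EF u v \<longrightarrow> b u \<noteq> b v"
    using b unfolding monotone_coloring_def by blast+
  \<comment> \<open>vertex \<open>u\<close> of \<open>F\<close> goes to the \<open>u\<close>-th entry of block \<open>b u\<close>\<close>
  define idx where "idx u = b u * k + u" for u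
  have idx_less: "idx u < l * k" if "u < k" for u
  proof -
    have "idx u < Suc (b u) * k" unfolding idx_def using that by simp
    also have "\<dots> \<le> l * k" using b_range that by (intro mult_le_mono1) (simp add: Suc_le_eq)
    finally show ?thesis .
  qed
  have idx_div: "idx u div k = b u" if "u < k" for u
    unfolding idx_def using that by simp
  show ?thesis
    unfolding contains_ordered_def
  proof (intro exI[of _ "s \<circ> idx"] conjI allI impI)
    show "strict_mono_on {0..<k} (s \<circ> idx)"
    proof (rule strict_mono_onI)
      fix u v assume "u \<in> {0..<k}" "v \<in> {0..<k}" "u < v"
      then have "idx u < idx v"
        using b_mono unfolding idx_def by (simp add: add_le_less_mono)
      then show "(s \<circ> idx) u < (s \<circ> idx) v"
        using strict_mono_onD[OF s_mono] idx_less \<open>u \<in> {0..<k}\<close> \<open>v \<in> {0..<k}\<close> by simp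
    qed
    show "(s \<circ> idx) ` {0..<k} \<subseteq> {0..<n}"
      using s_range idx_less by (auto simp: image_subset_iff)
    show "E ((s \<circ> idx) u) ((s \<circ> idx) v)" if "u < k" "v < k" "EF u v" for u v
    proof -
      have "h (b u) \<noteq> h (b v)"
        using b_edge b_range inj_onD[OF h_inj] that by blast
      then have "q ((s \<circ> idx) u) \<noteq> q ((s \<circ> idx) v)"
        using q_s idx_less idx_div that by simp
      moreover have "(s \<circ> idx) u < n" "(s \<circ> idx) v < n"
        using s_range idx_less that by (auto simp: image_subset_iff)
      ultimately show ?thesis
        using E_q by blast
    qed
  qed
qed

lemma forb_models_contain_turan_iff:
  assumes ordered: "\<forall>(k, EF) \<in> \<F>. ordered_graph k EF" and "0 < l"
  shows "(\<forall>n. \<exists>E. forb_model \<F> n E \<and> contains_turan n l E) \<longleftrightarrow>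
         (\<forall>(k, EF) \<in> \<F>. l < interval_chromatic_number k EF)"
proof
  assume models: "\<forall>n. \<exists>E. forb_model \<F> n E \<and> contains_turan n l E"
  show "\<forall>(k, EF) \<in> \<F>. l < interval_chromatic_number k EF"
  proof (clarify, rule ccontr)
    fix k EF assume F: "(k, EF) \<in> \<F>" and "\<not> l < interval_chromatic_number k EF"
    moreover have "ordered_graph k EF"
      using ordered F by blast
    ultimately obtain b where b: "monotone_coloring k EF l b"
      using interval_chromatic_number_le_iff[of k EF l] by (auto simp: not_less)
    obtain E where E: "forb_model \<F> (l * (l * k)) E" "contains_turan (l * (l * k)) l E"
      using models by blast
    have "contains_ordered (l * (l * k)) E k EF"
      using contains_turan_imp_contains_ordered[OF E(2) b] \<open>0 < l\<close> by simp
    then show False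
      using E(1) F unfolding forb_model_def by blast
  qed
next
  assume large: "\<forall>(k, EF) \<in> \<F>. l < interval_chromatic_number k EF"
  show "\<forall>n. \<exists>E. forb_model \<F> n E \<and> contains_turan n l E"
  proof
    fix n
    obtain E q where E: "ordered_graph n E" "contains_turan n l E" and q: "monotone_coloring n E l q"
      using ordered_turan_graph_exists[OF \<open>0 < l\<close>] by blast
    have "\<not> contains_ordered n E k EF" if "(k, EF) \<in> \<F>" for k EF
    proof
      assume "contains_ordered n E k EF"
      then obtain b where "monotone_coloring k EF l b"
        using contains_ordered_monotone_coloring[OF _ q] by blast
      moreover have "ordered_graph k EF"
        using ordered that by blast
      ultimately have "interval_chromatic_number k EF \<le> l"
        using interval_chromatic_number_le_iff by blast
      then show False
        using large that by fastforce
    qed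
    then show "\<exists>E. forb_model \<F> n E \<and> contains_turan n l E"
      using E unfolding forb_model_def by blast
  qed
qed

lemma Sup_positive_enat_below_plus_one:
  fixes c :: enat
  shows "Sup ({enat l | l. 1 \<le> l \<and> enat l < c} \<union> {0}) + 1 = max c 1"
    (is "Sup ?S + 1 = _")
proof (cases c)
  case (enat m)
  have "Sup ?S = enat (m - 1)"
  proof (rule antisym)
    show "Sup ?S \<le> enat (m - 1)"
      using enat by (intro Sup_least) (auto simp: zero_enat_def)
    show "enat (m - 1) \<le> Sup ?S"
      using enat by (intro Sup_upper) (cases "m \<le> 1"; auto simp: zero_enat_def)
  qed
  then show ?thesis
    using enat by (simp add: one_enat_def)
next
  case infinity
  have "Sup ?S = \<infinity>"
  proof (rule ccontr)
    assume "Sup ?S \<noteq> \<infinity>"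
    then obtain s where s: "Sup ?S = enat s"
      by auto
    have "enat (Suc s) \<le> Sup ?S"
      using infinity by (intro Sup_upper) auto
    then show False
      unfolding s by simp
  qed
  then show ?thesis
    using infinity by simp
qed

theorem proposition8p2:
  fixes \<F> :: "(nat \<times> (nat \<Rightarrow> nat \<Rightarrow> bool)) set"
  assumes "\<forall>(k, EF) \<in> \<F>. ordered_graph k EF"
  shows "chi_interp \<F> = max (interval_chromatic_family \<F>) 1"
proof -
  have "(\<forall>n. \<exists>E. forb_model \<F> n E \<and> contains_turan n l E) \<longleftrightarrow>
        enat l < interval_chromatic_family \<F>" if "1 \<le> l" for l
  proof -
    have "enat l < interval_chromatic_family \<F> \<longleftrightarrow>
          (\<forall>(k, EF) \<in> \<F>. enat (Suc l) \<le> enat (interval_chromatic_number k EF))"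
      unfolding interval_chromatic_family_def Suc_ile_eq[symmetric] le_INF_iff by auto
    then show ?thesis
      using forb_models_contain_turan_iff[OF assms, of l] that by auto
  qed
  then have "{enat l | l. l \<ge> 1 \<and> (\<forall>n. \<exists>E. forb_model \<F> n E \<and> contains_turan n l E)} =
             {enat l | l. 1 \<le> l \<and> enat l < interval_chromatic_family \<F>}"
    by blast
  then show ?thesis
    unfolding chi_interp_def by (simp only: Sup_positive_enat_below_plus_one)
qed

end
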